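(* Let $n\ge 1$, $L>0$, and let $f:[0,1]^n\to\mathbb{R}$ satisfy $|f(x)-f(y)|\le L\|x-y\|$ for all $x,y\in[0,1]^n$. Run the algorithm described in the context on $f$, producing queried centers $x_t$, edge vectors $v_t$ and values $f_t=f(P(x_t))$. Then for every $t\ge 2$, $$f_t-\min_{x\in[0,1]^n}f(x)\le (1+\theta)L\|v_t\|,$$ where $\theta=2^{1/n}$.
   Context: Notation: $\|\cdot\|$ is the Euclidean norm; $\Omega=[0,1]^n$; $\theta=2^{1/n}$; $P:\mathbb{R}^n\to\Omega$ is the Euclidean projection onto $\Omega$ (coordinatewise clipping to $[0,1]$); $e_i$ is the $i$-th standard basis vector and $v(i)$ the $i$-th coordinate of $v$. For a center $x\in\mathbb{R}^n$ and edge vector $v\in(0,\infty)^n$, $H(x,v)=\prod_{i=1}^n[x(i)-v(i),\,x(i)+v(i)]$. The algorithm maintains a list of candidates, each a triple (center $x$, edge vector $v$, score $s$). Splitting rule: given an evaluated point $x_a$ with edge vector $v_a$ and value $f_a$, let $I$ be an index maximizing $v_a(i)$ over $i\in\{1,\dots,n\}$ (ties broken by smallest index), let $z=\tfrac{v_a(I)}{2}e_I$, and add to the list the two candidates $(x_a+z,\ v_a-z,\ f_a-L\|v_a\|)$ and $(x_a-z,\ v_a-z,\ f_a-L\|v_a\|)$. Initialization: $x_1=v_1=(\theta^{-1},\theta^{-2},\dots,\theta^{-n})$, $f_1=f(P(x_1))$, and apply the splitting rule to $(x_1,v_1,f_1)$. For each $t\ge 2$: remove from the list a candidate with the smallest score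 (ties arbitrary), call its center $x_t$ and edge vector $v_t$, evaluate $f_t=f(P(x_t))$, and apply the splitting rule to $(x_t,v_t,f_t)$. *)

theory Defs
  imports "HOL-Analysis.Analysis" "HOL-Library.Multiset"
begin

text \<open>Vectors in R^n are represented as functions nat => real; coordinate i
 of the paper (1 <= i <= n) is stored at index i - 1, i.e. indices 0..n-1.
 Points of [0,1]^n have all coordinates with index >= n equal to 0.\<close>

type_synonym vec = "nat \<Rightarrow> real"
type_synonym cand = "vec \<times> vec \<times> real"

definition vnorm :: "nat \<Rightarrow> vec \<Rightarrow> real" where
  "vnorm n v = sqrt (\<Sum>i<n. (v i)\<^sup>2)"

definition cube :: "nat \<Rightarrow> vec set" where
  "cube n = {x. (\<forall>i<n. 0 \<le> x i \<and> x i \<le> 1) \<and> (\<forall>i\<ge>n. x i = 0)}"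

definition proj :: "nat \<Rightarrow> vec \<Rightarrow> vec" where
  "proj n x = (\<lambda>i. if i < n then min 1 (max 0 (x i)) else 0)"

definition theta :: "nat \<Rightarrow> real" where
  "theta n = 2 powr (1 / real n)"

definition x_init :: "nat \<Rightarrow> vec" where
  "x_init n = (\<lambda>i. if i < n then theta n powr (- real (Suc i)) else 0)"

definition split_index :: "nat \<Rightarrow> vec \<Rightarrow> nat" where
  "split_index n v = (LEAST i. i < n \<and> (\<forall>j<n. v j \<le> v i))"

definition split_cands :: "nat \<Rightarrow> real \<Rightarrow> vec \<Rightarrow> vec \<Rightarrow> real \<Rightarrow> cand multiset" where
  "split_cands n L x v fa =
     (let I = split_index n v;
          z = (\<lambda>i. if i = I then v I / 2 else 0);
          s = fa - L * vnorm n v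
      in {# ((\<lambda>i. x i + z i), (\<lambda>i. v i - z i), s),
            ((\<lambda>i. x i - z i), (\<lambda>i. v i - z i), s) #})"

text \<open>A run of the algorithm: xs t, vs t are the center and edge vector queried
 at iteration t (t >= 1), C t is the candidate list after iteration t.\<close>
definition is_run :: "nat \<Rightarrow> real \<Rightarrow> (vec \<Rightarrow> real) \<Rightarrow> (nat \<Rightarrow> vec) \<Rightarrow> (nat \<Rightarrow> vec)
                       \<Rightarrow> (nat \<Rightarrow> cand multiset) \<Rightarrow> bool" where
  "is_run n L f xs vs C \<longleftrightarrow>
     xs 1 = x_init n \<and> vs 1 = x_init n \<and>
     C 1 = split_cands n L (xs 1) (vs 1) (f (proj n (xs 1))) \<and>
     (\<forall>t\<ge>2. \<exists>s. (xs t, vs t, s) \<in># C (t - 1) \<and>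
               (\<forall>c\<in>#C (t - 1). s \<le> snd (snd c)) \<and>
               C t = C (t - 1) - {# (xs t, vs t, s) #}
                     + split_cands n L (xs t) (vs t) (f (proj n (xs t))))"

end

theory Submission
  imports Defs
begin

text \<open>Every candidate that ever enters the list is sound: its score bounds f from below on
  its cell H(x, v) \<inter> [0,1]^n, its value f(P x) exceeds its score by at most
  (1 + \<theta>) L \<parallel>v\<parallel>, and its edge vector is a permutation of
  (\<theta>^-k, ..., \<theta>^-(k+n-1)) for some level k. Halving the largest edge \<theta>^-k yields
  \<theta>^-(k+n), so both children lie on level k + 1 and the parent's norm is exactly \<theta> times
  the children's; a child's value differs from the parent's by at most L v(I)/2, which is at
  most L times the child's norm. Since the cells of the list always cover the cube, the
  minimal score, attained by the candidate queried next, is a lower bound for min f.\<close>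

lemma theta_ge_1: "theta n \<ge> 1"
  unfolding theta_def by (simp add: ge_one_powr_ge_zero)

lemma theta_powr_n: "n \<ge> 1 \<Longrightarrow> theta n powr real n = 2"
  unfolding theta_def by (simp add: powr_powr)

definition edge_len :: "nat \<Rightarrow> nat \<Rightarrow> real" where
  "edge_len n j = theta n powr - real j"

lemma edge_len_pos: "0 < edge_len n j"
  unfolding edge_len_def using theta_ge_1[of n] by simp

lemma edge_len_antimono: "j \<le> j' \<Longrightarrow> edge_len n j' \<le> edge_len n j"
  unfolding edge_len_def using theta_ge_1[of n] by (intro powr_mono) auto

lemma edge_len_Suc: "edge_len n j = theta n * edge_len n (Suc j)"
proof -
  have "theta n * edge_len n (Suc j) = theta n powr 1 * theta n powr (- real (Suc j))"
    unfolding edge_len_def using theta_ge_1[of n] by simp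
  also have "\<dots> = edge_len n j"
    unfolding edge_len_def powr_add[symmetric] by simp
  finally show ?thesis by simp
qed

lemma edge_len_add_n:
  assumes "n \<ge> 1"
  shows "edge_len n (j + n) = edge_len n j / 2"
proof -
  have "edge_len n (j + n) = theta n powr (- real j) * theta n powr (- real n)"
    unfolding edge_len_def by (simp add: powr_add[symmetric])
  also have "theta n powr (- real n) = 1 / 2"
    using theta_powr_n[OF assms] by (simp add: powr_minus_divide)
  finally show ?thesis unfolding edge_len_def by simp
qed

definition has_level :: "nat \<Rightarrow> nat \<Rightarrow> vec \<Rightarrow> bool" where
  "has_level n k v \<longleftrightarrow>
     image_mset v (mset_set {..<n}) = image_mset (edge_len n) (mset_set {k..<k + n})"

lemma sum_eq_if_image_mset_eq:
  assumes "image_mset v (mset_set A) = image_mset w (mset_set B)"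
  shows "(\<Sum>i\<in>A. h (v i)) = (\<Sum>j\<in>B. h (w j))"
proof -
  have "(\<Sum>i\<in>A. h (v i)) = sum_mset (image_mset h (image_mset v (mset_set A)))"
    by (simp only: sum_unfold_sum_mset image_mset.compositionality comp_def)
  also have "\<dots> = sum_mset (image_mset h (image_mset w (mset_set B)))"
    by (simp only: assms)
  also have "\<dots> = (\<Sum>j\<in>B. h (w j))"
    by (simp only: sum_unfold_sum_mset image_mset.compositionality comp_def)
  finally show ?thesis .
qed

lemma vnorm_has_level:
  assumes "has_level n k v"
  shows "vnorm n v = sqrt (\<Sum>j = k..<k + n. (edge_len n j)\<^sup>2)"
  unfolding vnorm_def
  using sum_eq_if_image_mset_eq[OF assms[unfolded has_level_def], of "\<lambda>x. x\<^sup>2"] by simp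

lemma vnorm_has_level_Suc:
  assumes "has_level n k v" and "has_level n (Suc k) w"
  shows "vnorm n v = theta n * vnorm n w"
proof -
  let ?S = "\<Sum>j = Suc k..<Suc k + n. (edge_len n j)\<^sup>2"
  have "(\<Sum>j = k..<k + n. (edge_len n j)\<^sup>2)
      = (\<Sum>j = k..<k + n. (theta n)\<^sup>2 * (edge_len n (Suc j))\<^sup>2)"
    by (subst edge_len_Suc) (simp add: power_mult_distrib)
  also have "\<dots> = (theta n)\<^sup>2 * ?S"
    by (simp only: add_Suc sum_distrib_left sum.shift_bounds_Suc_ivl)
  finally have "vnorm n v = sqrt ((theta n)\<^sup>2 * ?S)"
    by (simp only: vnorm_has_level[OF assms(1)])
  also have "\<dots> = theta n * sqrt ?S"
    using theta_ge_1[of n] by (simp only: real_sqrt_mult real_sqrt_abs abs_of_nonneg)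
  also have "sqrt ?S = vnorm n w"
    by (simp only: vnorm_has_level[OF assms(2)])
  finally show ?thesis .
qed

lemma has_level_values:
  assumes "has_level n k v"
  shows "v ` {..<n} = edge_len n ` {k..<k + n}"
proof -
  have "set_mset (image_mset v (mset_set {..<n}))
      = set_mset (image_mset (edge_len n) (mset_set {k..<k + n}))"
    using assms unfolding has_level_def by (rule arg_cong)
  then show ?thesis by simp
qed

lemma has_level_pos:
  assumes "has_level n k v" and "i < n"
  shows "0 < v i"
proof -
  have "v i \<in> edge_len n ` {k..<k + n}"
    using has_level_values[OF assms(1)] assms(2) by blast
  then show ?thesis using edge_len_pos by auto
qed

lemma has_level_max:
  assumes lv: "has_level n k v" and I: "I < n" and max: "\<forall>j<n. v j \<le> v I"
  shows "v I = edge_len n k"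
proof -
  note vals = has_level_values[OF lv]
  have "v I \<in> edge_len n ` {k..<k + n}" using vals I by blast
  then obtain j where j: "k \<le> j" "v I = edge_len n j" by auto
  have "edge_len n k \<in> v ` {..<n}" using vals I by simp
  then obtain i where i: "i < n" "v i = edge_len n k" by auto
  show ?thesis
    using j i max edge_len_antimono[of k j n] by force
qed

lemma image_mset_fun_upd_mset_set:
  assumes "finite A" and "a \<in> A"
  shows "image_mset (f(a := b)) (mset_set A) = add_mset b (image_mset f (mset_set (A - {a})))"
proof -
  have "mset_set A = add_mset a (mset_set (A - {a}))"
    using assms by (simp add: mset_set.remove)
  moreover have "image_mset (f(a := b)) (mset_set (A - {a})) = image_mset f (mset_set (A - {a}))"
    using assms(1) by (intro image_mset_cong) auto
  ultimately show ?thesis by simp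
qed

lemma mset_set_atLeastLessThan_lower:
  assumes "m < n"
  shows "mset_set {m..<n} = add_mset m (mset_set {Suc m..<n})"
proof -
  have "{m..<n} = insert m {Suc m..<n}" using assms by auto
  moreover have "mset_set (insert m {Suc m..<n}) = add_mset m (mset_set {Suc m..<n})"
    by (intro mset_set.insert) auto
  ultimately show ?thesis by (simp only:)
qed

lemma mset_set_atLeastLessThan_upper:
  assumes "m \<le> n"
  shows "mset_set {m..<Suc n} = add_mset n (mset_set {m..<n})"
proof -
  have "{m..<Suc n} = insert n {m..<n}" using assms by auto
  moreover have "mset_set (insert n {m..<n}) = add_mset n (mset_set {m..<n})"
    by (intro mset_set.insert) auto
  ultimately show ?thesis by (simp only:)
qed

lemma has_level_halve_max:
  assumes lv: "has_level n k v" and I: "I < n" and max: "\<forall>j<n. v j \<le> v I"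
  shows "has_level n (Suc k) (v(I := v I / 2))"
proof -
  have n: "n \<ge> 1" using I by simp
  have vI: "v I = edge_len n k" by (rule has_level_max[OF lv I max])
  let ?R = "image_mset (edge_len n) (mset_set {Suc k..<k + n})"
  have "add_mset (v I) (image_mset v (mset_set ({..<n} - {I}))) = image_mset v (mset_set {..<n})"
    using image_mset_fun_upd_mset_set[of "{..<n}" I v "v I"] I by simp
  also have "\<dots> = add_mset (v I) ?R"
    using lv n unfolding has_level_def vI by (simp add: mset_set_atLeastLessThan_lower)
  finally have rest: "image_mset v (mset_set ({..<n} - {I})) = ?R" by simp
  have "image_mset (v(I := v I / 2)) (mset_set {..<n}) = add_mset (edge_len n (k + n)) ?R"
    using image_mset_fun_upd_mset_set[of "{..<n}" I v "v I / 2"] I rest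
    unfolding vI edge_len_add_n[OF n] by simp
  also have "\<dots> = image_mset (edge_len n) (mset_set {Suc k..<Suc k + n})"
    using n by (simp add: mset_set_atLeastLessThan_upper)
  finally show ?thesis unfolding has_level_def .
qed

lemma split_index_is_max:
  assumes "n \<ge> 1"
  shows "split_index n v < n \<and> (\<forall>j<n. v j \<le> v (split_index n v))"
proof -
  define P where "P = (\<lambda>i. i < n \<and> (\<forall>j<n. v j \<le> v i))"
  have fin: "finite (v ` {..<n})" by simp
  have "v 0 \<in> v ` {..<n}" using assms by simp
  then have ne: "v ` {..<n} \<noteq> {}" by blast
  obtain i where i: "i \<in> {..<n}" "Max (v ` {..<n}) = v i"
    using Max_in[OF fin ne] by (rule imageE)
  have "v j \<le> v i" if "j < n" for j
    unfolding i(2)[symmetric] using that by (intro Max_ge[OF fin]) simp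
  with i(1) have "P i" unfolding P_def by blast
  then have "P (LEAST i. P i)" by (rule LeastI)
  then show ?thesis unfolding P_def split_index_def .
qed

lemma split_cands_eq:
  assumes "I = split_index n v"
  shows "split_cands n L x v fa =
           {#(x(I := x I + v I / 2), v(I := v I / 2), fa - L * vnorm n v),
             (x(I := x I - v I / 2), v(I := v I / 2), fa - L * vnorm n v)#}"
proof -
  have "(\<lambda>i. x i + (if i = I then v I / 2 else 0)) = x(I := x I + v I / 2)"
    "(\<lambda>i. x i - (if i = I then v I / 2 else 0)) = x(I := x I - v I / 2)"
    "(\<lambda>i. v i - (if i = I then v I / 2 else 0)) = v(I := v I / 2)"
    by (auto simp: fun_eq_iff)
  then show ?thesis unfolding split_cands_def Let_def assms[symmetric] by simp
qed

lemma vnorm_mono: "(\<And>i. i < n \<Longrightarrow> \<bar>a i\<bar> \<le> \<bar>b i\<bar>) \<Longrightarrow> vnorm n a \<le> vnorm n b"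
  unfolding vnorm_def by (intro real_sqrt_le_mono sum_mono) (simp add: abs_le_square_iff)

lemma abs_le_vnorm: "i < n \<Longrightarrow> \<bar>v i\<bar> \<le> vnorm n v"
proof -
  assume "i < n"
  then have "(v i)\<^sup>2 \<le> (\<Sum>j<n. (v j)\<^sup>2)" by (intro member_le_sum) auto
  then have "sqrt ((v i)\<^sup>2) \<le> vnorm n v" unfolding vnorm_def by (rule real_sqrt_le_mono)
  then show ?thesis by simp
qed

lemma vnorm_single_support:
  assumes "I < n" and "\<And>i. i < n \<Longrightarrow> i \<noteq> I \<Longrightarrow> a i = 0"
  shows "vnorm n a = \<bar>a I\<bar>"
proof -
  have "(\<Sum>i<n. (a i)\<^sup>2) = (a I)\<^sup>2"
    using assms by (subst sum.remove[of _ I]) (auto intro!: sum.neutral)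
  then show ?thesis unfolding vnorm_def by simp
qed

lemma proj_in_cube: "proj n x \<in> cube n"
  unfolding proj_def cube_def by auto

lemma proj_cube_id: "y \<in> cube n \<Longrightarrow> proj n y = y"
  unfolding proj_def cube_def by (auto simp: fun_eq_iff)

lemma clamp_contraction:
  "\<bar>min 1 (max 0 a) - min 1 (max 0 b)\<bar> \<le> \<bar>a - b :: real\<bar>"
  unfolding min_def max_def by (simp add: abs_le_iff) linarith

lemma proj_contraction: "\<bar>proj n x i - proj n y i\<bar> \<le> \<bar>x i - y i\<bar>"
  unfolding proj_def using clamp_contraction by simp

definition cell :: "nat \<Rightarrow> vec \<Rightarrow> vec \<Rightarrow> vec set" where
  "cell n x v = {y. \<forall>i<n. \<bar>y i - x i\<bar> \<le> v i}"

lemma cell_halve_subset: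
  assumes "\<bar>d\<bar> = v I / 2"
  shows "cell n (x(I := x I + d)) (v(I := v I / 2)) \<subseteq> cell n x v"
proof
  fix y assume y: "y \<in> cell n (x(I := x I + d)) (v(I := v I / 2))"
  have "\<bar>y i - x i\<bar> \<le> v i" if "i < n" for i
  proof (cases "i = I")
    case True
    have "\<bar>y I - (x I + d)\<bar> \<le> v I / 2" using y that True unfolding cell_def by auto
    moreover have "\<bar>y I - x I\<bar> \<le> \<bar>y I - (x I + d)\<bar> + \<bar>d\<bar>"
      using abs_triangle_ineq[of "y I - (x I + d)" d] by simp
    ultimately show ?thesis unfolding True using assms by linarith
  next
    case False
    then show ?thesis using y that unfolding cell_def by auto
  qed
  then show "y \<in> cell n x v" unfolding cell_def by blast
qed

lemma cell_halve_cover: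
  assumes "y \<in> cell n x v"
  shows "y \<in> cell n (x(I := x I + v I / 2)) (v(I := v I / 2))
       \<or> y \<in> cell n (x(I := x I - v I / 2)) (v(I := v I / 2))"
proof (cases "x I \<le> y I")
  case True
  then have "y \<in> cell n (x(I := x I + v I / 2)) (v(I := v I / 2))"
    using assms unfolding cell_def by (auto simp: abs_le_iff)
  then show ?thesis ..
next
  case False
  then have "y \<in> cell n (x(I := x I - v I / 2)) (v(I := v I / 2))"
    using assms unfolding cell_def by (auto simp: abs_le_iff)
  then show ?thesis ..
qed

lemma split_cands_cover:
  assumes "y \<in> cell n x v"
  obtains x' v' s' where "(x', v', s') \<in># split_cands n L x v fa" and "y \<in> cell n x' v'"
  using cell_halve_cover[OF assms, of "split_index n v"] that
  unfolding split_cands_eq[OF refl] by auto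

definition covers :: "nat \<Rightarrow> cand multiset \<Rightarrow> bool" where
  "covers n M \<longleftrightarrow> (\<forall>y\<in>cube n. \<exists>x v s. (x, v, s) \<in># M \<and> y \<in> cell n x v)"

lemma covers_split:
  assumes cov: "covers n M" and sel: "(x, v, s) \<in># M"
  shows "covers n (M - {#(x, v, s)#} + split_cands n L x v fa)"
  unfolding covers_def
proof
  fix y assume "y \<in> cube n"
  then obtain x' v' s' where c: "(x', v', s') \<in># M" "y \<in> cell n x' v'"
    using cov unfolding covers_def by auto
  show "\<exists>x' v' s'. (x', v', s') \<in># M - {#(x, v, s)#} + split_cands n L x v fa \<and> y \<in> cell n x' v'"
  proof (cases "(x', v', s') = (x, v, s)")
    case True
    then have "y \<in> cell n x v" using c(2) by simp
    then obtain x'' v'' s'' where "(x'', v'', s'') \<in># split_cands n L x v fa" "y \<in> cell n x'' v''"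
      by (rule split_cands_cover)
    then show ?thesis by auto
  next
    case False
    then have "(x', v', s') \<in># M - {#(x, v, s)#}"
      using c(1) by (auto simp: in_diff_count)
    then show ?thesis using c(2) by auto
  qed
qed

lemma covers_split_cands:
  assumes "cube n \<subseteq> cell n x v"
  shows "covers n (split_cands n L x v fa)"
  unfolding covers_def
proof
  fix y assume "y \<in> cube n"
  then have "y \<in> cell n x v" using assms by blast
  then obtain x' v' s' where "(x', v', s') \<in># split_cands n L x v fa" "y \<in> cell n x' v'"
    by (rule split_cands_cover)
  then show "\<exists>x' v' s'. (x', v', s') \<in># split_cands n L x v fa \<and> y \<in> cell n x' v'" by blast
qed

lemma has_level_x_init: "has_level n 1 (x_init n)"
proof -
  have "mset_set {1..<1 + n} = image_mset Suc (mset_set {..<n})"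
    by (simp add: image_mset_mset_set image_Suc_lessThan atLeastLessThanSuc_atLeastAtMost)
  moreover have "image_mset (x_init n) (mset_set {..<n}) = image_mset (edge_len n \<circ> Suc) (mset_set {..<n})"
    by (intro image_mset_cong) (simp add: x_init_def edge_len_def)
  ultimately show ?thesis
    unfolding has_level_def by (simp add: image_mset.compositionality)
qed

lemma cube_subset_cell_x_init: "n \<ge> 1 \<Longrightarrow> cube n \<subseteq> cell n (x_init n) (x_init n)"
proof
  fix y assume n: "n \<ge> 1" and y: "y \<in> cube n"
  have "1 / 2 \<le> x_init n i" if "i < n" for i
  proof -
    have "1 / 2 = edge_len n (0 + n)"
      using edge_len_add_n[OF n, of 0] theta_ge_1[of n] by (simp add: edge_len_def)
    also have "\<dots> \<le> edge_len n (Suc i)"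
      using that by (intro edge_len_antimono) simp
    also have "\<dots> = x_init n i"
      using that by (simp add: x_init_def edge_len_def)
    finally show ?thesis .
  qed
  moreover have "0 \<le> y i \<and> y i \<le> 1" if "i < n" for i
    using y that unfolding cube_def by blast
  ultimately show "y \<in> cell n (x_init n) (x_init n)"
    unfolding cell_def by (force simp: abs_le_iff)
qed

locale lipschitz_on_cube =
  fixes n :: nat and L :: real and f :: "vec \<Rightarrow> real"
  assumes n_ge_1: "n \<ge> 1" and L_pos: "L > 0"
    and lipschitz: "\<forall>x\<in>cube n. \<forall>y\<in>cube n. \<bar>f x - f y\<bar> \<le> L * vnorm n (\<lambda>i. x i - y i)"
begin

lemma proj_value_diff: "\<bar>f (proj n x) - f (proj n y)\<bar> \<le> L * vnorm n (\<lambda>i. x i - y i)"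
proof -
  have "vnorm n (\<lambda>i. proj n x i - proj n y i) \<le> vnorm n (\<lambda>i. x i - y i)"
    by (intro vnorm_mono) (simp add: proj_contraction)
  then show ?thesis
    using lipschitz proj_in_cube L_pos by (meson mult_left_mono less_imp_le order_trans)
qed

lemma lower_bound_on_cell:
  assumes "y \<in> cube n" and "y \<in> cell n x v"
  shows "f (proj n x) - L * vnorm n v \<le> f y"
proof -
  have "vnorm n (\<lambda>i. x i - y i) \<le> vnorm n v"
    using assms(2) unfolding cell_def by (intro vnorm_mono) (force simp: abs_minus_commute)
  then show ?thesis
    using proj_value_diff[of x y] proj_cube_id[OF assms(1)] L_pos
    by (smt (verit) mult_left_mono)
qed

definition sound_cand :: "cand \<Rightarrow> bool" where
  "sound_cand = (\<lambda>(x, v, s).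
     (\<forall>y \<in> cube n \<inter> cell n x v. s \<le> f y) \<and>
     f (proj n x) - s \<le> (1 + theta n) * L * vnorm n v \<and>
     (\<exists>k. has_level n k v))"

lemma sound_child:
  assumes lv: "has_level n k v" and I: "I = split_index n v" and d: "\<bar>d\<bar> = v I / 2"
  shows "sound_cand (x(I := x I + d), v(I := v I / 2), f (proj n x) - L * vnorm n v)"
proof -
  let ?x' = "x(I := x I + d)" and ?v' = "v(I := v I / 2)"
  have I_max: "I < n" "\<forall>j<n. v j \<le> v I" using split_index_is_max[OF n_ge_1] I by auto
  have lv': "has_level n (Suc k) ?v'" by (rule has_level_halve_max[OF lv I_max])
  have "vnorm n (\<lambda>i. ?x' i - x i) = \<bar>d\<bar>"
    using vnorm_single_support[OF I_max(1), of "\<lambda>i. ?x' i - x i"] by simp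
  also have "\<dots> \<le> vnorm n ?v'"
    using d abs_le_vnorm[OF I_max(1), of ?v'] by simp
  finally have "\<bar>f (proj n ?x') - f (proj n x)\<bar> \<le> L * vnorm n ?v'"
    using proj_value_diff[of ?x' x] L_pos by (smt (verit) mult_left_mono)
  moreover have "vnorm n v = theta n * vnorm n ?v'"
    by (rule vnorm_has_level_Suc[OF lv lv'])
  ultimately have "f (proj n ?x') - (f (proj n x) - L * vnorm n v) \<le> (1 + theta n) * L * vnorm n ?v'"
    by (simp add: algebra_simps)
  moreover have "f (proj n x) - L * vnorm n v \<le> f y" if "y \<in> cube n \<inter> cell n ?x' ?v'" for y
    using that cell_halve_subset[of d v I n x, OF d] lower_bound_on_cell by blast
  ultimately show ?thesis
    unfolding sound_cand_def using lv' by auto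
qed

lemma sound_split_cands:
  assumes "has_level n k v" and "c \<in># split_cands n L x v (f (proj n x))"
  shows "sound_cand c"
proof -
  define I where "I = split_index n v"
  have "0 < v I" using has_level_pos[OF assms(1)] split_index_is_max[OF n_ge_1] I_def by simp
  then show ?thesis
    using assms(2) sound_child[OF assms(1) I_def, of "v I / 2" x] sound_child[OF assms(1) I_def, of "- (v I / 2)" x]
    unfolding split_cands_eq[OF I_def] by auto
qed

lemma score_bound_le_Inf:
  assumes sound: "\<forall>c\<in>#M. sound_cand c" and cov: "covers n M"
    and below: "\<forall>c\<in>#M. s \<le> snd (snd c)"
  shows "s \<le> (INF y\<in>cube n. f y)"
proof (rule cINF_greatest)
  show "cube n \<noteq> {}" using proj_in_cube by blast
next
  fix y assume y: "y \<in> cube n"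
  then obtain x v s' where c: "(x, v, s') \<in># M" "y \<in> cell n x v"
    using cov unfolding covers_def by blast
  then have "s \<le> s'" using below by fastforce
  also have "s' \<le> f y" using sound c y unfolding sound_cand_def by fastforce
  finally show "s \<le> f y" .
qed

lemma run_invariant:
  assumes run: "is_run n L f xs vs C" and "m \<ge> 1"
  shows "(\<forall>c\<in>#C m. sound_cand c) \<and> covers n (C m)"
  using \<open>m \<ge> 1\<close>
proof (induction m rule: dec_induct)
  case base
  have C1: "C 1 = split_cands n L (x_init n) (x_init n) (f (proj n (x_init n)))"
    using run unfolding is_run_def by simp
  have "\<forall>c\<in>#C 1. sound_cand c"
    unfolding C1 using sound_split_cands[OF has_level_x_init] by blast
  moreover have "covers n (C 1)"
    unfolding C1 by (rule covers_split_cands[OF cube_subset_cell_x_init[OF n_ge_1]])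
  ultimately show ?case ..
next
  case (step m)
  obtain s where sel: "(xs (Suc m), vs (Suc m), s) \<in># C m" and
    C_Suc: "C (Suc m) = C m - {#(xs (Suc m), vs (Suc m), s)#}
                        + split_cands n L (xs (Suc m)) (vs (Suc m)) (f (proj n (xs (Suc m))))"
    using run step.hyps unfolding is_run_def by (metis Suc_le_mono diff_Suc_1 one_add_one plus_1_eq_Suc)
  obtain k where "has_level n k (vs (Suc m))"
    using sel step.IH unfolding sound_cand_def by fastforce
  then have "\<forall>c\<in>#C (Suc m). sound_cand c"
    using step.IH sound_split_cands unfolding C_Suc by (auto dest: in_diffD)
  moreover have "covers n (C (Suc m))"
    unfolding C_Suc using covers_split step.IH sel by blast
  ultimately show ?case ..
qed

end

theorem lemma2:
  fixes n :: nat and L :: real and f :: "vec \<Rightarrow> real"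
    and xs vs :: "nat \<Rightarrow> vec" and C :: "nat \<Rightarrow> cand multiset"
  assumes "n \<ge> 1" and "L > 0"
    and "\<forall>x\<in>cube n. \<forall>y\<in>cube n. \<bar>f x - f y\<bar> \<le> L * vnorm n (\<lambda>i. x i - y i)"
    and "is_run n L f xs vs C"
  shows "\<forall>t\<ge>2. f (proj n (xs t)) - (INF y\<in>cube n. f y) \<le> (1 + theta n) * L * vnorm n (vs t)"
proof (intro allI impI)
  interpret lipschitz_on_cube n L f
    using assms(1-3) by unfold_locales
  fix t :: nat assume t: "t \<ge> 2"
  obtain s where sel: "(xs t, vs t, s) \<in># C (t - 1)" and min: "\<forall>c\<in>#C (t - 1). s \<le> snd (snd c)"
    using assms(4) t unfolding is_run_def by blast
  have inv: "(\<forall>c\<in>#C (t - 1). sound_cand c) \<and> covers n (C (t - 1))"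
    using run_invariant[OF assms(4), of "t - 1"] t by simp
  then have "s \<le> (INF y\<in>cube n. f y)"
    using score_bound_le_Inf min by blast
  moreover have "f (proj n (xs t)) - s \<le> (1 + theta n) * L * vnorm n (vs t)"
    using inv sel unfolding sound_cand_def by fastforce
  ultimately show "f (proj n (xs t)) - (INF y\<in>cube n. f y) \<le> (1 + theta n) * L * vnorm n (vs t)"
    by linarith
qed

end
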